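(* Let $\sigma>0$ and $\mu>0$, and consider the single-dimensional population EM iteration $$\lambda^{(t+1)} = M(\lambda^{(t)},\mu) := \mathbb{E}_{x\sim\mathcal{N}(\mu,\sigma^2)}\left[\tanh\left(\frac{\lambda^{(t)} x}{\sigma^2}\right) x\right],\qquad t\ge 0,$$ started from some $\lambda^{(0)}>0$. Then for every $t\ge 0$, $$|\lambda^{(t+1)}-\mu| \le \kappa^{(t)}\, |\lambda^{(t)}-\mu|, \qquad \text{where } \kappa^{(t)} = \exp\left(-\frac{\min(\lambda^{(t)},\mu)^2}{2\sigma^2}\right).$$ Moreover, $\kappa^{(t)}$ is a decreasing function of $t$.
   Context: This iteration is the population (infinite-sample) EM algorithm for estimating the parameter $\mu$ of the symmetric mixture $\tfrac12\mathcal{N}(\mu,\sigma^2)+\tfrac12\mathcal{N}(-\mu,\sigma^2)$ on $\mathbb{R}$ with known variance $\sigma^2$; $\lambda^{(t)}$ is the current estimate of $\mu$. *)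

theory Defs
  imports "HOL-Probability.Probability"
begin

text \<open>Population EM operator for the symmetric two-component Gaussian mixture in one
dimension: M(lambda, mu) = E_{x ~ N(mu, sigma^2)} [tanh(lambda x / sigma^2) x],
with the expectation written as a Lebesgue integral against the normal density
(normal_density mu sigma has standard deviation sigma).\<close>
definition EM_M :: "real \<Rightarrow> real \<Rightarrow> real \<Rightarrow> real" where
  "EM_M \<sigma> lam \<mu> = (\<integral>x. tanh (lam * x / \<sigma>\<^sup>2) * x * normal_density \<mu> \<sigma> x \<partial>lborel)"

definition EM_kappa :: "real \<Rightarrow> real \<Rightarrow> real \<Rightarrow> real" where
  "EM_kappa \<sigma> \<mu> lam = exp (- (min lam \<mu>)\<^sup>2 / (2 * \<sigma>\<^sup>2))"

end

theory Submission
  imports Defs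
begin

text \<open>
  Since 1 - tanh u = exp(-u) / cosh u, completing the square and symmetrising in x turns
  \<mu> - M(\<lambda>, \<mu>) into the integral of
  exp(-\<mu>^2/(2\<sigma>^2)) x \<phi>(x) sinh((\<mu> - \<lambda>) x/\<sigma>^2) / cosh(\<lambda> x/\<sigma>^2),
  where \<phi> is the centred normal density.
  If \<lambda> \<ge> \<mu>, the integrand is nonpositive, and |sinh(b x)| \<le> b |x| cosh(\<lambda> x/\<sigma>^2) for
  0 \<le> b = (\<lambda> - \<mu>)/\<sigma>^2 \<le> \<lambda>/\<sigma>^2 bounds it by a second moment of \<phi>; hence
  \<mu> \<le> M \<le> \<mu> + exp(-\<mu>^2/(2\<sigma>^2)) (\<lambda> - \<mu>).
  If \<lambda> < \<mu>, dropping cosh \<ge> 1 leaves x sinh(b x) \<phi>(x), whose integral is a first moment of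
  shifted Gaussians; hence |M - \<mu>| \<le> exp((-\<mu>^2 + (\<mu> - \<lambda>)^2)/(2\<sigma>^2)) (\<mu> - \<lambda>)
  \<le> exp(-\<lambda>^2/(2\<sigma>^2)) (\<mu> - \<lambda>), and in particular M \<ge> \<lambda>.
  So min(\<lambda>^(t), \<mu>) never decreases, which keeps the iterates positive and makes \<kappa>^(t) decrease.
\<close>

lemma borel_measurable_sinh [measurable]: "(sinh :: real \<Rightarrow> real) \<in> borel_measurable borel"
  by (intro borel_measurable_continuous_onI continuous_intros)

lemma borel_measurable_cosh [measurable]: "(cosh :: real \<Rightarrow> real) \<in> borel_measurable borel"
  by (intro borel_measurable_continuous_onI continuous_intros)

lemma borel_measurable_tanh [measurable]: "(tanh :: real \<Rightarrow> real) \<in> borel_measurable borel"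
  by (intro borel_measurable_continuous_onI continuous_intros) auto

lemma one_minus_tanh_real: "1 - tanh (u::real) = exp (-u) / cosh u"
proof -
  have "1 - tanh u = (cosh u - sinh u) / cosh u"
    using cosh_real_pos[of u] by (simp add: tanh_def field_simps)
  then show ?thesis by (simp add: cosh_minus_sinh)
qed

lemma sinh_le_mult_cosh:
  assumes "(y::real) \<ge> 0" shows "sinh y \<le> y * cosh y"
proof -
  have "(\<lambda>y. y * cosh y - sinh y) 0 \<le> (\<lambda>y. y * cosh y - sinh y) y"
  proof (rule DERIV_nonneg_imp_nondecreasing[OF assms])
    fix z :: real assume "0 \<le> z" "z \<le> y"
    have "((\<lambda>y. y * cosh y - sinh y) has_real_derivative z * sinh z) (at z)"
      by (rule derivative_eq_intros | simp)+
    moreover have "0 \<le> z * sinh z"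
      using \<open>0 \<le> z\<close> by (simp add: sinh_real_nonneg_iff)
    ultimately show "\<exists>d. ((\<lambda>y. y * cosh y - sinh y) has_real_derivative d) (at z) \<and> 0 \<le> d"
      by blast
  qed
  then show ?thesis by simp
qed

lemma abs_sinh_le_mult_cosh:
  fixes a b z :: real
  assumes "0 \<le> b" "b \<le> a"
  shows "\<bar>sinh (b * z)\<bar> \<le> b * \<bar>z\<bar> * cosh (a * z)"
proof -
  have "\<bar>sinh (b * z)\<bar> = sinh (b * \<bar>z\<bar>)"
    using assms(1) by (cases "z \<ge> 0") (auto simp: sinh_real_nonneg_iff sinh_real_nonpos_iff
        mult_nonneg_nonpos)
  also have "\<dots> \<le> b * \<bar>z\<bar> * cosh (b * \<bar>z\<bar>)"
    using assms by (intro sinh_le_mult_cosh) simp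
  also have "\<dots> \<le> b * \<bar>z\<bar> * cosh (a * \<bar>z\<bar>)"
    using assms by (intro mult_left_mono) (auto simp: cosh_real_nonneg_le_iff mult_right_mono)
  also have "cosh (a * \<bar>z\<bar>) = cosh (a * z)"
    by (cases "z \<ge> 0") auto
  finally show ?thesis .
qed

lemma normal_density_shift:
  assumes "\<sigma> > 0"
  shows "normal_density m \<sigma> x =
    normal_density 0 \<sigma> x * exp (-m\<^sup>2 / (2*\<sigma>\<^sup>2)) * exp (m * x / \<sigma>\<^sup>2)"
proof -
  have "-(x - m)\<^sup>2 / (2*\<sigma>\<^sup>2) = -(x - 0)\<^sup>2 / (2*\<sigma>\<^sup>2) + -m\<^sup>2 / (2*\<sigma>\<^sup>2) + m * x / \<sigma>\<^sup>2"
    using assms by (simp add: field_simps power2_eq_square)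
  then show ?thesis unfolding normal_density_def by (simp only: exp_add mult.assoc)
qed

lemma exp_mult_normal_density:
  assumes "\<sigma> > 0"
  shows "exp (c * x) * normal_density 0 \<sigma> x = exp (c\<^sup>2 * \<sigma>\<^sup>2 / 2) * normal_density (c * \<sigma>\<^sup>2) \<sigma> x"
proof -
  have "-(c * \<sigma>\<^sup>2)\<^sup>2 / (2*\<sigma>\<^sup>2) = -(c\<^sup>2 * \<sigma>\<^sup>2 / 2)" "c * \<sigma>\<^sup>2 * x / \<sigma>\<^sup>2 = c * x"
    using assms by (simp_all add: field_simps power2_eq_square)
  then show ?thesis
    unfolding normal_density_shift[OF assms, of "c * \<sigma>\<^sup>2"] by (simp add: exp_minus field_simps)
qed

lemma has_bochner_integral_exp_normal_moment_1:
  assumes "\<sigma> > 0"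
  shows "has_bochner_integral lborel (\<lambda>x. exp (c * x) * normal_density 0 \<sigma> x * x)
    (exp (c\<^sup>2 * \<sigma>\<^sup>2 / 2) * (c * \<sigma>\<^sup>2))"
  unfolding exp_mult_normal_density[OF assms] mult.assoc
  by (intro has_bochner_integral_mult_right normal_moment_nz_1 assms)

lemma has_bochner_integral_sinh_normal_moment_1:
  assumes "\<sigma> > 0"
  shows "has_bochner_integral lborel (\<lambda>x. sinh (c * x) * normal_density 0 \<sigma> x * x)
    (exp (c\<^sup>2 * \<sigma>\<^sup>2 / 2) * (c * \<sigma>\<^sup>2))"
proof -
  have "has_bochner_integral lborel
      (\<lambda>x. (exp (c * x) * normal_density 0 \<sigma> x * x - exp ((-c) * x) * normal_density 0 \<sigma> x * x) / 2)
      ((exp (c\<^sup>2 * \<sigma>\<^sup>2 / 2) * (c * \<sigma>\<^sup>2) - exp ((-c)\<^sup>2 * \<sigma>\<^sup>2 / 2) * ((-c) * \<sigma>\<^sup>2)) / 2)"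
    by (intro has_bochner_integral_divide_zero has_bochner_integral_diff
        has_bochner_integral_exp_normal_moment_1 assms)
  then show ?thesis
    by (simp add: sinh_def field_simps)
qed

lemma abs_integral_le_has_bochner_integral:
  fixes f g :: "'a::euclidean_space \<Rightarrow> real"
  assumes "has_bochner_integral M g I" "f \<in> borel_measurable M" "\<And>x. \<bar>f x\<bar> \<le> g x"
  shows "\<bar>integral\<^sup>L M f\<bar> \<le> I"
proof -
  have "integrable M f"
    using assms(3) by (intro Bochner_Integration.integrable_bound[OF integrable.intros[OF assms(1)] assms(2)] AE_I2)
      (metis abs_ge_self order_trans real_norm_def)
  then show ?thesis
    using integral_abs_bound_integral[OF _ integrable.intros[OF assms(1)]] assms(3)
      has_bochner_integral_integral_eq[OF assms(1)] by simp
qed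

definition EM_gap :: "real \<Rightarrow> real \<Rightarrow> real \<Rightarrow> real \<Rightarrow> real" where
  "EM_gap \<sigma> l m x = exp (-m\<^sup>2 / (2*\<sigma>\<^sup>2)) * x * normal_density 0 \<sigma> x
     / cosh (l * x / \<sigma>\<^sup>2) * sinh ((m - l) * x / \<sigma>\<^sup>2)"

lemma borel_measurable_EM_gap [measurable]: "EM_gap \<sigma> l m \<in> borel_measurable borel"
  unfolding EM_gap_def by measurable

lemma EM_gap_eq_symmetrisation:
  fixes \<sigma> l m x :: real
  assumes \<sigma>: "\<sigma> > 0"
  defines "F \<equiv> \<lambda>u. (1 - tanh (l * u / \<sigma>\<^sup>2)) * u * normal_density m \<sigma> u"
  shows "EM_gap \<sigma> l m x = (F x + F (-x)) / 2"
proof -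
  define K where "K = exp (-m\<^sup>2 / (2*\<sigma>\<^sup>2)) * x * normal_density 0 \<sigma> x / cosh (l * x / \<sigma>\<^sup>2)"
  have F_eq: "F u = exp (-m\<^sup>2 / (2*\<sigma>\<^sup>2)) * u * normal_density 0 \<sigma> u / cosh (l * u / \<sigma>\<^sup>2)
      * exp ((m - l) * u / \<sigma>\<^sup>2)" for u
  proof -
    have "exp (m * u / \<sigma>\<^sup>2) * exp (-(l * u / \<sigma>\<^sup>2)) = exp ((m - l) * u / \<sigma>\<^sup>2)"
      by (simp add: exp_add[symmetric] diff_divide_distrib left_diff_distrib)
    then show ?thesis
      unfolding F_def one_minus_tanh_real normal_density_shift[OF \<sigma>, of m u]
      by (simp add: field_simps)
  qed
  have "F x = K * exp ((m - l) * x / \<sigma>\<^sup>2)"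
    unfolding F_eq K_def ..
  moreover have "F (-x) = - K * exp (-((m - l) * x / \<sigma>\<^sup>2))"
    unfolding F_eq K_def by (simp add: normal_density_def)
  ultimately show ?thesis
    unfolding EM_gap_def K_def[symmetric] sinh_def by (simp add: field_simps)
qed

lemma integrable_tanh_normal_moment_1:
  assumes "\<sigma> > 0"
  shows "integrable lborel (\<lambda>x. tanh (l * x / \<sigma>\<^sup>2) * x * normal_density m \<sigma> x)"
proof (rule Bochner_Integration.integrable_bound[OF integrable_normal_moment_nz_1[OF assms]])
  show "AE x in lborel. norm (tanh (l * x / \<sigma>\<^sup>2) * x * normal_density m \<sigma> x)
      \<le> norm (normal_density m \<sigma> x * x)"
  proof (rule AE_I2)
    fix x
    have "\<bar>tanh (l * x / \<sigma>\<^sup>2)\<bar> \<le> 1"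
      using tanh_real_lt_1 tanh_real_gt_neg1 by (simp add: abs_le_iff less_imp_le)
    then have "\<bar>tanh (l * x / \<sigma>\<^sup>2)\<bar> * (\<bar>x\<bar> * normal_density m \<sigma> x) \<le> \<bar>x\<bar> * normal_density m \<sigma> x"
      using mult_right_mono by fastforce
    then show "norm (tanh (l * x / \<sigma>\<^sup>2) * x * normal_density m \<sigma> x) \<le> norm (normal_density m \<sigma> x * x)"
      by (simp add: abs_mult mult_ac)
  qed
qed measurable

lemma EM_gap_integral:
  assumes "\<sigma> > 0"
  shows "\<mu> - EM_M \<sigma> l \<mu> = (\<integral>x. EM_gap \<sigma> l \<mu> x \<partial>lborel)"
proof -
  define F where "F = (\<lambda>u. (1 - tanh (l * u / \<sigma>\<^sup>2)) * u * normal_density \<mu> \<sigma> u)"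
  have F_diff: "F = (\<lambda>x. normal_density \<mu> \<sigma> x * x - tanh (l * x / \<sigma>\<^sup>2) * x * normal_density \<mu> \<sigma> x)"
    unfolding F_def by (auto simp: algebra_simps)
  note integrable_normal_moment_nz_1[OF assms] integrable_tanh_normal_moment_1[OF assms]
  then have int_F: "integrable lborel F" and int_eq: "(\<integral>x. F x \<partial>lborel) = \<mu> - EM_M \<sigma> l \<mu>"
    unfolding F_diff EM_M_def by (simp_all add: integral_normal_moment_nz_1[OF assms])
  have "EM_gap \<sigma> l \<mu> = (\<lambda>x. (F x + F (-x)) / 2)"
    unfolding F_def by (rule ext, rule EM_gap_eq_symmetrisation[OF assms])
  then have "(\<integral>x. EM_gap \<sigma> l \<mu> x \<partial>lborel) = ((\<integral>x. F x \<partial>lborel) + (\<integral>x. F (-x) \<partial>lborel)) / 2"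
    using int_F lborel_integrable_real_affine[OF int_F, of "-1" 0] by simp
  also have "(\<integral>x. F (-x) \<partial>lborel) = (\<integral>x. F x \<partial>lborel)"
    using lborel_integral_real_affine[of "-1" F 0] by simp
  finally show ?thesis
    using int_eq by simp
qed

lemma EM_gap_nonpos:
  assumes "l \<ge> m"
  shows "EM_gap \<sigma> l m x \<le> 0"
proof -
  have "x * sinh ((m - l) * x / \<sigma>\<^sup>2) \<le> 0"
  proof (cases "x \<ge> 0")
    case True
    then have "(m - l) * x / \<sigma>\<^sup>2 \<le> 0"
      using assms by (intro divide_nonpos_nonneg mult_nonpos_nonneg) auto
    then show ?thesis using True by (simp add: mult_nonneg_nonpos sinh_real_nonpos_iff)
  next
    case False
    then have "(m - l) * x / \<sigma>\<^sup>2 \<ge> 0"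
      using assms by (intro divide_nonneg_nonneg mult_nonpos_nonpos) auto
    then show ?thesis using False by (simp add: mult_nonpos_nonneg sinh_real_nonneg_iff)
  qed
  moreover have "exp (-m\<^sup>2 / (2*\<sigma>\<^sup>2)) * normal_density 0 \<sigma> x / cosh (l * x / \<sigma>\<^sup>2) \<ge> 0"
    using cosh_real_pos[of "l * x / \<sigma>\<^sup>2"] by simp
  ultimately have "exp (-m\<^sup>2 / (2*\<sigma>\<^sup>2)) * normal_density 0 \<sigma> x / cosh (l * x / \<sigma>\<^sup>2)
      * (x * sinh ((m - l) * x / \<sigma>\<^sup>2)) \<le> 0"
    by (rule mult_nonneg_nonpos[rotated])
  then show ?thesis
    unfolding EM_gap_def by (simp add: mult_ac)
qed

lemma abs_EM_gap_le_overshoot: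
  assumes "\<sigma> > 0" "m \<ge> 0" "l \<ge> m"
  shows "\<bar>EM_gap \<sigma> l m x\<bar> \<le> exp (-m\<^sup>2 / (2*\<sigma>\<^sup>2)) * ((l - m) / \<sigma>\<^sup>2) * (normal_density 0 \<sigma> x * x\<^sup>2)"
proof -
  define b where "b = (l - m) / \<sigma>\<^sup>2"
  have "0 \<le> b" "b \<le> l / \<sigma>\<^sup>2"
    using assms by (simp_all add: b_def divide_right_mono)
  then have "\<bar>sinh (b * x)\<bar> \<le> b * \<bar>x\<bar> * cosh (l / \<sigma>\<^sup>2 * x)"
    by (rule abs_sinh_le_mult_cosh)
  then have bound: "\<bar>sinh (b * x)\<bar> / cosh (l * x / \<sigma>\<^sup>2) \<le> b * \<bar>x\<bar>"
    using cosh_real_pos[of "l * x / \<sigma>\<^sup>2"] by (simp add: divide_le_eq)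
  have "(m - l) * x / \<sigma>\<^sup>2 = - (b * x)"
    using assms by (simp add: b_def field_simps)
  then have "\<bar>EM_gap \<sigma> l m x\<bar> = exp (-m\<^sup>2 / (2*\<sigma>\<^sup>2)) * \<bar>x\<bar> * normal_density 0 \<sigma> x
      * (\<bar>sinh (b * x)\<bar> / cosh (l * x / \<sigma>\<^sup>2))"
    unfolding EM_gap_def using cosh_real_pos[of "l * x / \<sigma>\<^sup>2"] by (simp add: abs_mult)
  also have "\<dots> \<le> exp (-m\<^sup>2 / (2*\<sigma>\<^sup>2)) * \<bar>x\<bar> * normal_density 0 \<sigma> x * (b * \<bar>x\<bar>)"
    using bound by (intro mult_left_mono) auto
  also have "\<dots> = exp (-m\<^sup>2 / (2*\<sigma>\<^sup>2)) * b * (normal_density 0 \<sigma> x * x\<^sup>2)"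
    by (simp add: power2_eq_square abs_mult_self_eq algebra_simps)
  finally show ?thesis unfolding b_def .
qed

lemma EM_M_overshoot:
  assumes "\<sigma> > 0" "\<mu> \<ge> 0" "l \<ge> \<mu>"
  shows "\<mu> \<le> EM_M \<sigma> l \<mu>" and "\<bar>EM_M \<sigma> l \<mu> - \<mu>\<bar> \<le> exp (-\<mu>\<^sup>2 / (2*\<sigma>\<^sup>2)) * (l - \<mu>)"
proof -
  let ?c = "exp (-\<mu>\<^sup>2 / (2*\<sigma>\<^sup>2)) * ((l - \<mu>) / \<sigma>\<^sup>2)"
  have "has_bochner_integral lborel (\<lambda>x. normal_density 0 \<sigma> x * x\<^sup>2) (\<sigma>\<^sup>2)"
    using normal_moment_even[OF assms(1), of 0 1] by (simp add: power2_eq_square)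
  then have bound: "has_bochner_integral lborel (\<lambda>x. ?c * (normal_density 0 \<sigma> x * x\<^sup>2))
      (exp (-\<mu>\<^sup>2 / (2*\<sigma>\<^sup>2)) * (l - \<mu>))"
    using has_bochner_integral_mult_right[of ?c lborel _ "\<sigma>\<^sup>2"] assms(1) by simp
  have pointwise: "\<bar>EM_gap \<sigma> l \<mu> x\<bar> \<le> ?c * (normal_density 0 \<sigma> x * x\<^sup>2)" for x
    using abs_EM_gap_le_overshoot[OF assms] by (simp only: mult.assoc)
  have "\<bar>\<integral>x. EM_gap \<sigma> l \<mu> x \<partial>lborel\<bar> \<le> exp (-\<mu>\<^sup>2 / (2*\<sigma>\<^sup>2)) * (l - \<mu>)"
    using abs_integral_le_has_bochner_integral[OF bound _ pointwise] by simp
  moreover have "(\<integral>x. EM_gap \<sigma> l \<mu> x \<partial>lborel) \<le> 0"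
    using integral_nonneg_AE[of "\<lambda>x. - EM_gap \<sigma> l \<mu> x" lborel] EM_gap_nonpos[OF assms(3)] by simp
  ultimately show "\<mu> \<le> EM_M \<sigma> l \<mu>" "\<bar>EM_M \<sigma> l \<mu> - \<mu>\<bar> \<le> exp (-\<mu>\<^sup>2 / (2*\<sigma>\<^sup>2)) * (l - \<mu>)"
    using EM_gap_integral[OF assms(1), of \<mu> l] by linarith+
qed

lemma abs_EM_gap_le_undershoot:
  assumes "\<sigma> > 0" "l \<le> m"
  shows "\<bar>EM_gap \<sigma> l m x\<bar> \<le>
    exp (-m\<^sup>2 / (2*\<sigma>\<^sup>2)) * (sinh ((m - l) / \<sigma>\<^sup>2 * x) * normal_density 0 \<sigma> x * x)"
proof -
  define b where "b = (m - l) / \<sigma>\<^sup>2"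
  have "0 \<le> b"
    using assms by (simp add: b_def)
  then have "0 \<le> x * sinh (b * x)"
    by (cases "x \<ge> 0") (auto simp: sinh_real_nonneg_iff sinh_real_nonpos_iff mult_nonneg_nonpos
        zero_le_mult_iff)
  then have "0 \<le> exp (-m\<^sup>2 / (2*\<sigma>\<^sup>2)) * normal_density 0 \<sigma> x * (x * sinh (b * x))"
    by simp
  moreover have "EM_gap \<sigma> l m x = exp (-m\<^sup>2 / (2*\<sigma>\<^sup>2)) * normal_density 0 \<sigma> x * (x * sinh (b * x))
      / cosh (l * x / \<sigma>\<^sup>2)"
    unfolding EM_gap_def b_def by (simp add: mult_ac)
  moreover have "cosh (l * x / \<sigma>\<^sup>2) \<ge> 1"
    by (rule cosh_real_ge_1)
  ultimately have "\<bar>EM_gap \<sigma> l m x\<bar> \<le> exp (-m\<^sup>2 / (2*\<sigma>\<^sup>2)) * normal_density 0 \<sigma> x * (x * sinh (b * x))"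
    by (simp add: divide_le_eq mult_le_cancel_left1 mult_le_cancel_left2 mult_left_le)
  then show ?thesis
    unfolding b_def by (simp add: mult_ac)
qed

lemma EM_M_undershoot:
  assumes "\<sigma> > 0" "0 \<le> l" "l \<le> \<mu>"
  shows "\<bar>EM_M \<sigma> l \<mu> - \<mu>\<bar> \<le> exp (-l\<^sup>2 / (2*\<sigma>\<^sup>2)) * (\<mu> - l)"
proof -
  define b where "b = (\<mu> - l) / \<sigma>\<^sup>2"
  have b: "b\<^sup>2 * \<sigma>\<^sup>2 / 2 = (\<mu> - l)\<^sup>2 / (2*\<sigma>\<^sup>2)" "b * \<sigma>\<^sup>2 = \<mu> - l"
    using assms(1) by (simp_all add: b_def power2_eq_square field_simps)
  have "has_bochner_integral lborel
      (\<lambda>x. exp (-\<mu>\<^sup>2 / (2*\<sigma>\<^sup>2)) * (sinh (b * x) * normal_density 0 \<sigma> x * x))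
      (exp (-\<mu>\<^sup>2 / (2*\<sigma>\<^sup>2)) * (exp (b\<^sup>2 * \<sigma>\<^sup>2 / 2) * (b * \<sigma>\<^sup>2)))"
    by (intro has_bochner_integral_mult_right has_bochner_integral_sinh_normal_moment_1 assms(1))
  then have "has_bochner_integral lborel
      (\<lambda>x. exp (-\<mu>\<^sup>2 / (2*\<sigma>\<^sup>2)) * (sinh (b * x) * normal_density 0 \<sigma> x * x))
      (exp (-\<mu>\<^sup>2 / (2*\<sigma>\<^sup>2) + (\<mu> - l)\<^sup>2 / (2*\<sigma>\<^sup>2)) * (\<mu> - l))"
    unfolding b exp_add by (simp only: mult.assoc)
  from abs_integral_le_has_bochner_integral[OF this _
        abs_EM_gap_le_undershoot[OF assms(1,3), folded b_def]]
  have "\<bar>\<integral>x. EM_gap \<sigma> l \<mu> x \<partial>lborel\<bar> \<le> exp (-\<mu>\<^sup>2 / (2*\<sigma>\<^sup>2) + (\<mu> - l)\<^sup>2 / (2*\<sigma>\<^sup>2)) * (\<mu> - l)"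
    by simp
  also have "\<dots> \<le> exp (-l\<^sup>2 / (2*\<sigma>\<^sup>2)) * (\<mu> - l)"
  proof (intro mult_right_mono)
    have "-\<mu>\<^sup>2 + (\<mu> - l)\<^sup>2 \<le> -l\<^sup>2"
      using mult_right_mono[OF assms(3,2)] by (simp add: power2_eq_square algebra_simps)
    then have "(-\<mu>\<^sup>2 + (\<mu> - l)\<^sup>2) / (2*\<sigma>\<^sup>2) \<le> -l\<^sup>2 / (2*\<sigma>\<^sup>2)"
      by (intro divide_right_mono) auto
    then show "exp (-\<mu>\<^sup>2 / (2*\<sigma>\<^sup>2) + (\<mu> - l)\<^sup>2 / (2*\<sigma>\<^sup>2)) \<le> exp (-l\<^sup>2 / (2*\<sigma>\<^sup>2))"
      by (simp add: add_divide_distrib diff_divide_distrib)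
  qed (use assms in auto)
  finally show ?thesis
    using EM_gap_integral[OF assms(1), of \<mu> l] by simp
qed

lemma EM_M_contraction:
  assumes "\<sigma> > 0" "\<mu> \<ge> 0" "l \<ge> 0"
  shows "\<bar>EM_M \<sigma> l \<mu> - \<mu>\<bar> \<le> EM_kappa \<sigma> \<mu> l * \<bar>l - \<mu>\<bar>"
proof (cases "l \<ge> \<mu>")
  case True
  then show ?thesis
    using EM_M_overshoot(2)[OF assms(1,2) True] by (simp add: EM_kappa_def)
next
  case False
  then show ?thesis
    using EM_M_undershoot[OF assms(1,3)] by (simp add: EM_kappa_def)
qed

lemma min_le_min_EM_M:
  assumes "\<sigma> > 0" "\<mu> \<ge> 0" "l \<ge> 0"
  shows "min l \<mu> \<le> min (EM_M \<sigma> l \<mu>) \<mu>"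
proof (cases "l \<ge> \<mu>")
  case True
  then show ?thesis
    using EM_M_overshoot(1)[OF assms(1,2) True] by simp
next
  case False
  have "\<bar>EM_M \<sigma> l \<mu> - \<mu>\<bar> \<le> exp (-l\<^sup>2 / (2*\<sigma>\<^sup>2)) * (\<mu> - l)"
    using EM_M_undershoot[OF assms(1,3)] False by simp
  also have "\<dots> \<le> \<mu> - l"
    using False by (intro mult_left_le_one_le) auto
  finally show ?thesis
    using False by simp
qed

lemma EM_kappa_antimono:
  assumes "0 \<le> min l \<mu>" "min l \<mu> \<le> min l' \<mu>"
  shows "EM_kappa \<sigma> \<mu> l' \<le> EM_kappa \<sigma> \<mu> l"
proof -
  have "(min l \<mu>)\<^sup>2 \<le> (min l' \<mu>)\<^sup>2"
    using power_mono[OF assms(2,1)] .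
  then have "-(min l' \<mu>)\<^sup>2 / (2*\<sigma>\<^sup>2) \<le> -(min l \<mu>)\<^sup>2 / (2*\<sigma>\<^sup>2)"
    by (intro divide_right_mono) auto
  then show ?thesis
    unfolding EM_kappa_def by simp
qed

theorem theorem1:
  fixes \<sigma> \<mu> :: real and lam :: "nat \<Rightarrow> real"
  assumes "\<sigma> > 0" and "\<mu> > 0"
    and "lam 0 > 0"
    and "\<And>t. lam (Suc t) = EM_M \<sigma> (lam t) \<mu>"
  shows "(\<forall>t. \<bar>lam (Suc t) - \<mu>\<bar> \<le> EM_kappa \<sigma> \<mu> (lam t) * \<bar>lam t - \<mu>\<bar>)
         \<and> decseq (\<lambda>t. EM_kappa \<sigma> \<mu> (lam t))"
proof -
  have min_step: "min (lam t) \<mu> \<le> min (lam (Suc t)) \<mu>" if "lam t > 0" for t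
    using min_le_min_EM_M[OF assms(1) less_imp_le[OF assms(2)]] that assms(4) by simp
  have pos: "lam t > 0" for t
  proof (induction t)
    case (Suc t)
    then show ?case
      using min_step[OF Suc] assms(2) by linarith
  qed (use assms(3) in simp)
  have "decseq (\<lambda>t. EM_kappa \<sigma> \<mu> (lam t))"
    using pos assms(2) min_step by (intro decseq_SucI EM_kappa_antimono) (auto simp: less_imp_le)
  then show ?thesis
    using EM_M_contraction[OF assms(1) less_imp_le[OF assms(2)]] pos assms(4) by (simp add: less_imp_le)
qed

end
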